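(* For every word $w\in\mathcal{M}_n^e$, \[ Hw=Q_+Q_-^{-1}w=\sum_{w'\ge w}\ \sum_{T\subseteq E^y_{w'}}(-1)^{|T|}\psi^y_Tw', \] where $w'$ ranges over words of $\mathcal{M}_n^e$ with $w'\ge w$.
   Context: $\mathcal{M}_n^e$ is the set of words in letters $x,y$ with $n_x$ $x$'s and $n_y$ $y$'s ($n=n_x+n_y$, $e=n_y-n_x$), $\mathcal{F}_n^e$ its $\mathbb{Z}$-span. $w_0\le w_1$ iff for each $i$ the $i$-th $x$ of $w_0$ is at a position $\le$ that of the $i$-th $x$ of $w_1$. $\langle w_0|w_1\rangle=1$ if $w_0\le w_1$, else $0$; $w_0\cdot w_1=\delta_{w_0,w_1}$. $H$ is the linear map with $\langle u|v\rangle=\langle v|Hu\rangle$ for all $u,v\in\mathcal{F}_n^e$; $Q_\pm$ are the linear maps with $u\cdot v=\langle u|Q_+v\rangle=\langle Q_-u|v\rangle$. $E^y_w$ is the set of $y$'s in $w$ immediately followed by an $x$; for $T\subseteq E^y_w$, $\psi^y_Tw$ replaces each such $yx$ (with $y\in T$) by $xy$. *)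

theory Defs
  imports Main
begin

datatype letter = X | Y

type_synonym word = "letter list"

definition Mset :: "nat \<Rightarrow> int \<Rightarrow> word set" where
  "Mset n e = {w. length w = n \<and>
      int (length (filter (\<lambda>c. c = Y) w)) - int (length (filter (\<lambda>c. c = X) w)) = e}"

text \<open>F_n^e: integer combinations of words of M_n^e, as finitely supported coefficient functions.\<close>
definition Fspan :: "nat \<Rightarrow> int \<Rightarrow> (word \<Rightarrow> int) set" where
  "Fspan n e = {f. \<forall>w. w \<notin> Mset n e \<longrightarrow> f w = 0}"

definition basis :: "word \<Rightarrow> (word \<Rightarrow> int)" where
  "basis w = (\<lambda>u. if u = w then 1 else 0)"

definition xpos :: "word \<Rightarrow> nat list" where
  "xpos w = filter (\<lambda>i. w ! i = X) [0..<length w]"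

definition word_le :: "word \<Rightarrow> word \<Rightarrow> bool" where
  "word_le w0 w1 \<longleftrightarrow> length (xpos w0) = length (xpos w1) \<and>
     (\<forall>i < length (xpos w0). xpos w0 ! i \<le> xpos w1 ! i)"

definition pairing :: "nat \<Rightarrow> int \<Rightarrow> (word \<Rightarrow> int) \<Rightarrow> (word \<Rightarrow> int) \<Rightarrow> int" where
  "pairing n e u v = (\<Sum>w0\<in>Mset n e. \<Sum>w1\<in>Mset n e.
      u w0 * v w1 * (if word_le w0 w1 then 1 else 0))"

definition dotp :: "nat \<Rightarrow> int \<Rightarrow> (word \<Rightarrow> int) \<Rightarrow> (word \<Rightarrow> int) \<Rightarrow> int" where
  "dotp n e u v = (\<Sum>w\<in>Mset n e. u w * v w)"

definition lin_on :: "nat \<Rightarrow> int \<Rightarrow> ((word \<Rightarrow> int) \<Rightarrow> (word \<Rightarrow> int)) \<Rightarrow> bool" where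
  "lin_on n e L \<longleftrightarrow> (\<forall>u\<in>Fspan n e. L u \<in> Fspan n e) \<and>
     (\<forall>u\<in>Fspan n e. \<forall>v\<in>Fspan n e. L (\<lambda>w. u w + v w) = (\<lambda>w. L u w + L v w)) \<and>
     (\<forall>c. \<forall>u\<in>Fspan n e. L (\<lambda>w. c * u w) = (\<lambda>w. c * L u w))"

definition Ey :: "word \<Rightarrow> nat set" where
  "Ey w = {i. Suc i < length w \<and> w ! i = Y \<and> w ! Suc i = X}"

text \<open>psi^y_T w: replace each yx (with the y at a position in T) by xy.\<close>
definition psiy :: "nat set \<Rightarrow> word \<Rightarrow> word" where
  "psiy T w = map (\<lambda>j. if j \<in> T then X else if 1 \<le> j \<and> j - 1 \<in> T then Y else w ! j)
                  [0..<length w]"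

definition RHS :: "nat \<Rightarrow> int \<Rightarrow> word \<Rightarrow> (word \<Rightarrow> int)" where
  "RHS n e w = (\<lambda>u. \<Sum>w'\<in>{w'\<in>Mset n e. word_le w w'}.
       \<Sum>T\<in>Pow (Ey w'). (-1) ^ card T * (if psiy T w' = u then 1 else 0))"

end

theory Submission
  imports Defs
begin

text \<open>
  The move psi_T (psiy T) shifts the x's standing at positions t + 1, t in T, one step to the
  left, so w0 <= psi_T w' holds iff w0 <= w' and w0 <= psi_{t} w' for every t in T.
  Inclusion-exclusion over T then gives sum_T (-1)^|T| <w0|psi_T w'> = [w0 = w'], because a
  word strictly below w' stays below some single move psi_{t} w'. Hence the right-hand side
  R_w satisfies <u|R_w> = <w|u> for all u. The form <.|.> is unitriangular with respect to the
  sum of the x-positions, hence nondegenerate on both sides, and so H w = R_w. Likewise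
  Q_-^{-1} w is the indicator of the up-set of w, and its image under Q_+ again represents
  the functional u |-> <w|u>.
\<close>

section \<open>Positions of the letter x\<close>

lemma set_xpos: "set (xpos w) = {j. j < length w \<and> w ! j = X}"
  by (auto simp: xpos_def)

lemma sorted_xpos: "sorted_wrt (<) (xpos w)"
  unfolding xpos_def by (rule sorted_wrt_filter) simp

lemma length_xpos: "length (xpos w) = length (filter (\<lambda>c. c = X) w)"
proof -
  have "length (xpos w) = card {j. j < length w \<and> w ! j = X}"
    using distinct_card[of "xpos w"] sorted_xpos[of w] by (simp add: strict_sorted_iff set_xpos)
  then show ?thesis by (simp add: length_filter_conv_card)
qed

lemma length_filter_Y: "length (filter (\<lambda>c. c = Y) w) = length w - length (filter (\<lambda>c. c = X) w)"
proof -
  have "(\<lambda>c. c \<noteq> X) = (\<lambda>c. c = Y)"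
    using letter.exhaust by auto
  then show ?thesis
    using sum_length_filter_compl[of "\<lambda>c. c = X" w] by simp
qed

lemma length_xpos_Mset_eq:
  assumes "w \<in> Mset n e" and "v \<in> Mset n e"
  shows "length (xpos w) = length (xpos v)"
proof -
  have count: "2 * int (length (xpos u)) = int n - e" if "u \<in> Mset n e" for u
    using that length_filter_Y[of u] length_filter_le[of _ u]
    by (auto simp: Mset_def length_xpos of_nat_diff)
  show ?thesis using count[OF assms(1)] count[OF assms(2)] by simp
qed

lemma xpos_eq_imp_eq:
  assumes "length a = length b" and "xpos a = xpos b"
  shows "a = b"
proof (rule nth_equalityI)
  fix j assume j: "j < length a"
  have "(a ! j = X) = (b ! j = X)"
    using arg_cong[OF assms(2), of set] j assms(1) by (auto simp: set_xpos)
  then show "a ! j = b ! j" by (cases "a ! j"; cases "b ! j") auto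
qed (rule assms(1))

lemma finite_Mset: "finite (Mset n e)"
proof -
  have "finite (UNIV :: letter set)"
    by (metis (full_types) UNIV_eq_I finite.emptyI finite_insert insertCI letter.exhaust)
  then have "finite {xs :: word. set xs \<subseteq> UNIV \<and> length xs = n}"
    by (rule finite_lists_length_eq)
  then show ?thesis by (rule finite_subset[rotated]) (auto simp: Mset_def)
qed

lemma word_le_refl: "word_le w w"
  by (simp add: word_le_def)

lemma word_le_imp_sum_xpos_less:
  assumes a: "a \<in> Mset n e" and b: "b \<in> Mset n e" and le: "word_le a b" and ne: "a \<noteq> b"
  shows "sum_list (xpos a) < sum_list (xpos b)"
proof -
  have len: "length (xpos a) = length (xpos b)" using length_xpos_Mset_eq[OF a b] .
  have pt: "\<forall>i<length (xpos b). xpos a ! i \<le> xpos b ! i" using le len by (simp add: word_le_def)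
  have "xpos a \<noteq> xpos b" using xpos_eq_imp_eq a b ne by (auto simp: Mset_def)
  then obtain i where i: "i < length (xpos b)" "xpos a ! i \<noteq> xpos b ! i"
    using len by (auto simp: list_eq_iff_nth_eq)
  then have "xpos a ! i < xpos b ! i" using pt by (simp add: order_less_le)
  then have "(\<Sum>i<length (xpos b). xpos a ! i) < (\<Sum>i<length (xpos b). xpos b ! i)"
    using pt i(1) by (intro sum_strict_mono_ex1) auto
  then show ?thesis using len by (simp add: sum_list_sum_nth atLeast0LessThan)
qed

section \<open>The moves psiy T\<close>

text \<open>The position to which psiy T moves an x standing at position q.\<close>
definition xshift :: "nat set \<Rightarrow> nat \<Rightarrow> nat" where
  "xshift T q = (if q \<noteq> 0 \<and> q - 1 \<in> T then q - 1 else q)"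

lemma length_psiy [simp]: "length (psiy T w) = length w"
  by (simp add: psiy_def)

lemma nth_psiy:
  "j < length w \<Longrightarrow> psiy T w ! j = (if j \<in> T then X else if 1 \<le> j \<and> j - 1 \<in> T then Y else w ! j)"
  by (simp add: psiy_def)

lemma set_xpos_psiy:
  assumes T: "T \<subseteq> Ey w"
  shows "set (xpos (psiy T w)) = xshift T ` set (xpos w)"
proof
  show "set (xpos (psiy T w)) \<subseteq> xshift T ` set (xpos w)"
  proof
    fix j assume "j \<in> set (xpos (psiy T w))"
    then have j: "j < length w" and jX: "psiy T w ! j = X" by (auto simp: set_xpos)
    show "j \<in> xshift T ` set (xpos w)"
    proof (cases "j \<in> T")
      case True
      then have "Suc j \<in> set (xpos w)" using T by (auto simp: Ey_def set_xpos)
      moreover have "xshift T (Suc j) = j" using True by (simp add: xshift_def)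
      ultimately show ?thesis by (metis image_eqI)
    next
      case False
      then have "j \<in> set (xpos w)" "xshift T j = j"
        using j jX by (auto simp: set_xpos xshift_def nth_psiy split: if_splits)
      then show ?thesis by (metis image_eqI)
    qed
  qed
next
  show "xshift T ` set (xpos w) \<subseteq> set (xpos (psiy T w))"
  proof
    fix j assume "j \<in> xshift T ` set (xpos w)"
    then obtain q where q: "q < length w" "w ! q = X" and j: "j = xshift T q"
      by (auto simp: set_xpos)
    have "q \<notin> T" using T q by (auto simp: Ey_def)
    then show "j \<in> set (xpos (psiy T w))"
      using q j by (auto simp: xshift_def set_xpos nth_psiy)
  qed
qed

lemma xshift_strict_mono:
  assumes T: "T \<subseteq> Ey w" and x: "x \<in> set (xpos w)" and y: "y \<in> set (xpos w)" and "x < y"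
  shows "xshift T x < xshift T y"
proof (cases "y \<noteq> 0 \<and> y - 1 \<in> T")
  case True
  then have "w ! (y - 1) = Y" using T by (auto simp: Ey_def)
  then have "x \<noteq> y - 1" using x by (auto simp: set_xpos)
  then show ?thesis using True \<open>x < y\<close> by (auto simp: xshift_def)
qed (use \<open>x < y\<close> in \<open>auto simp: xshift_def\<close>)

lemma xpos_psiy:
  assumes T: "T \<subseteq> Ey w"
  shows "xpos (psiy T w) = map (xshift T) (xpos w)"
proof (rule strict_sorted_equal)
  show "sorted_wrt (<) (map (xshift T) (xpos w))"
    unfolding sorted_wrt_map
    by (rule sorted_wrt_mono_rel[OF _ sorted_xpos]) (auto intro: xshift_strict_mono[OF T])
qed (simp_all add: sorted_xpos set_xpos_psiy[OF T])

lemma psiy_in_Mset: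
  assumes w: "w \<in> Mset n e" and T: "T \<subseteq> Ey w"
  shows "psiy T w \<in> Mset n e"
proof -
  have "length (filter (\<lambda>c. c = X) (psiy T w)) = length (filter (\<lambda>c. c = X) w)"
    using xpos_psiy[OF T] by (metis length_map length_xpos)
  then show ?thesis
    using w length_filter_Y[of w] length_filter_Y[of "psiy T w"] length_filter_le[of _ w]
    by (auto simp: Mset_def of_nat_diff)
qed

lemma le_xshift_iff: "q \<le> xshift T p \<longleftrightarrow> q \<le> p \<and> (\<forall>t\<in>T. q \<le> xshift {t} p)"
  by (auto simp: xshift_def)

lemma word_le_psiy_iff:
  assumes w0: "w0 \<in> Mset n e" and w': "w' \<in> Mset n e" and T: "T \<subseteq> Ey w'"
  shows "word_le w0 (psiy T w') \<longleftrightarrow> word_le w0 w' \<and> (\<forall>t\<in>T. word_le w0 (psiy {t} w'))"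
proof -
  have len: "length (xpos w0) = length (xpos w')" using length_xpos_Mset_eq[OF w0 w'] .
  have le_iff: "word_le w0 (psiy S w') \<longleftrightarrow> (\<forall>i < length (xpos w'). xpos w0 ! i \<le> xshift S (xpos w' ! i))"
    if "S \<subseteq> Ey w'" for S
    using len by (simp add: word_le_def xpos_psiy[OF that])
  have "word_le w0 (psiy T w') \<longleftrightarrow> (\<forall>i < length (xpos w').
      xpos w0 ! i \<le> xpos w' ! i \<and> (\<forall>t\<in>T. xpos w0 ! i \<le> xshift {t} (xpos w' ! i)))"
    by (simp add: le_iff[OF T] le_xshift_iff[of _ T])
  also have "\<dots> \<longleftrightarrow> word_le w0 w' \<and> (\<forall>t\<in>T. \<forall>i < length (xpos w'). xpos w0 ! i \<le> xshift {t} (xpos w' ! i))"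
    using len by (auto simp: word_le_def)
  also have "\<dots> \<longleftrightarrow> word_le w0 w' \<and> (\<forall>t\<in>T. word_le w0 (psiy {t} w'))"
    using T by (intro conj_cong ball_cong refl) (auto simp: le_iff)
  finally show ?thesis .
qed

lemma not_word_le_psiy_self:
  assumes t: "t \<in> Ey w"
  shows "\<not> word_le w (psiy {t} w)"
proof
  assume le: "word_le w (psiy {t} w)"
  have "Suc t \<in> set (xpos w)" using t by (auto simp: Ey_def set_xpos)
  then obtain i where i: "i < length (xpos w)" "xpos w ! i = Suc t"
    by (metis in_set_conv_nth)
  have "xpos w ! i \<le> xshift {t} (xpos w ! i)"
    using le i t by (auto simp: word_le_def xpos_psiy)
  then show False using i by (simp add: xshift_def)
qed

lemma sum_Pow_minus_one_power:
  assumes "finite S"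
  shows "(\<Sum>T\<in>Pow S. (-1) ^ card T) = (if S = {} then 1 else (0::'a::comm_ring_1))"
proof -
  have "(\<Sum>T\<in>Pow S. (-1) ^ card T) = (\<Prod>x\<in>S. 1 - 1 :: 'a)"
    using prod_diff_conv_sum[OF assms, of "\<lambda>_. 1::'a" "\<lambda>_. 1"] by simp
  then show ?thesis using assms by (simp add: power_0_left)
qed

lemma first_strict_gap:
  fixes p q :: "nat list"
  assumes p: "sorted_wrt (<) p" and q: "sorted_wrt (<) q" and len: "length q = length p"
    and le: "\<forall>i<length p. q ! i \<le> p ! i" and ne: "q \<noteq> p"
  obtains i where "i < length p" "q ! i < p ! i" "p ! i - 1 \<notin> set p"
proof -
  have ex: "\<exists>i. i < length p \<and> q ! i < p ! i"
    using ne len le by (metis le_neq_implies_less nth_equalityI)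
  define i where "i = (LEAST i. i < length p \<and> q ! i < p ! i)"
  have i: "i < length p" "q ! i < p ! i"
    using LeastI_ex[OF ex] by (auto simp: i_def)
  have agree: "q ! j = p ! j" if "j < i" for j
  proof -
    have "j < length p" using that i(1) by simp
    moreover have "\<not> (j < length p \<and> q ! j < p ! j)"
      using not_less_Least[of j "\<lambda>i. i < length p \<and> q ! i < p ! i"] that by (simp add: i_def)
    ultimately show ?thesis using le by (simp add: nat_less_le)
  qed
  have "p ! i - 1 \<notin> set p"
  proof
    assume "p ! i - 1 \<in> set p"
    then obtain j where j: "j < length p" "p ! j = p ! i - 1" by (auto simp: in_set_conv_nth)
    have "p ! j < p ! i" using j(2) i(2) by simp
    then have "j < i"
      using sorted_wrt_nth_less[OF p, of i j] j(1) by (metis less_asym linorder_neqE_nat)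
    then have "q ! j < q ! i" using sorted_wrt_nth_less[OF q] i len by auto
    then show False using agree[OF \<open>j < i\<close>] j i(2) by simp
  qed
  then show thesis using i that by blast
qed

lemma exists_single_psiy_above:
  assumes w0: "w0 \<in> Mset n e" and w': "w' \<in> Mset n e" and le: "word_le w0 w'" and ne: "w0 \<noteq> w'"
  obtains t where "t \<in> Ey w'" "word_le w0 (psiy {t} w')"
proof -
  let ?p = "xpos w'" and ?q = "xpos w0"
  have len: "length ?q = length ?p" using length_xpos_Mset_eq[OF w0 w'] .
  have pt: "\<forall>i<length ?p. ?q ! i \<le> ?p ! i" using le len by (simp add: word_le_def)
  have "?q \<noteq> ?p" using xpos_eq_imp_eq w0 w' ne by (auto simp: Mset_def)
  then obtain i where i: "i < length ?p" "?q ! i < ?p ! i" "?p ! i - 1 \<notin> set ?p"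
    using first_strict_gap[OF sorted_xpos sorted_xpos len pt] by blast
  \<comment> \<open>t is the y just before the first x of w' lying strictly right of its partner in w0\<close>
  define t where "t = ?p ! i - 1"
  have Suc_t: "Suc t = ?p ! i" using i(2) by (simp add: t_def)
  have "Suc t < length w'" "w' ! Suc t = X"
    using nth_mem[OF i(1)] by (auto simp: Suc_t set_xpos)
  moreover have "w' ! t \<noteq> X"
    using i(3) \<open>Suc t < length w'\<close> by (auto simp: t_def set_xpos)
  ultimately have t: "t \<in> Ey w'"
    by (auto simp: Ey_def intro: letter.exhaust)
  have "?q ! k \<le> xshift {t} (?p ! k)" if k: "k < length ?p" for k
  proof (cases "?p ! k = Suc t")
    case True
    then have "k = i"
      using sorted_xpos[of w'] k i(1) Suc_t by (simp add: strict_sorted_iff nth_eq_iff_index_eq)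
    then show ?thesis using i(2) Suc_t by (simp add: xshift_def)
  qed (use pt k in \<open>auto simp: xshift_def\<close>)
  then have "word_le w0 (psiy {t} w')"
    using t len by (simp add: word_le_def xpos_psiy)
  with t show thesis by (rule that)
qed

lemma alternating_sum_word_le_psiy:
  assumes w0: "w0 \<in> Mset n e" and w': "w' \<in> Mset n e"
  shows "(\<Sum>T\<in>Pow (Ey w'). (-1::int) ^ card T * (if word_le w0 (psiy T w') then 1 else 0))
       = (if w0 = w' then 1 else 0)"
proof -
  define S where "S = {t \<in> Ey w'. word_le w0 (psiy {t} w')}"
  have finite_Ey: "finite (Ey w')"
    by (rule finite_subset[of _ "{..<length w'}"]) (auto simp: Ey_def)
  have "(\<Sum>T\<in>Pow (Ey w'). (-1::int) ^ card T * (if word_le w0 (psiy T w') then 1 else 0))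
      = (\<Sum>T\<in>Pow (Ey w'). if word_le w0 w' \<and> T \<subseteq> S then (-1) ^ card T else 0)"
    using word_le_psiy_iff[OF w0 w'] by (intro sum.cong) (auto simp: S_def)
  also have "\<dots> = (if word_le w0 w' then \<Sum>T\<in>Pow S. (-1) ^ card T else 0)"
  proof -
    have "{T \<in> Pow (Ey w'). T \<subseteq> S} = Pow S" by (auto simp: S_def)
    then show ?thesis
      using sum.inter_filter[of "Pow (Ey w')" "\<lambda>T. (-1::int) ^ card T" "\<lambda>T. T \<subseteq> S"] finite_Ey
      by simp
  qed
  also have "\<dots> = (if word_le w0 w' \<and> S = {} then 1 else 0)"
    using finite_Ey by (simp add: S_def sum_Pow_minus_one_power)
  also have "word_le w0 w' \<and> S = {} \<longleftrightarrow> w0 = w'"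
  proof
    assume below: "word_le w0 w' \<and> S = {}"
    show "w0 = w'"
    proof (rule ccontr)
      assume "w0 \<noteq> w'"
      with below obtain t where "t \<in> Ey w'" "word_le w0 (psiy {t} w')"
        using exists_single_psiy_above[OF w0 w'] by blast
      with below show False by (auto simp: S_def)
    qed
  qed (use not_word_le_psiy_self word_le_refl in \<open>auto simp: S_def\<close>)
  finally show ?thesis .
qed

section \<open>Nondegeneracy of the forms\<close>

lemma basis_in_Fspan: "w \<in> Mset n e \<Longrightarrow> basis w \<in> Fspan n e"
  by (auto simp: basis_def Fspan_def)

lemma pairing_basis_left:
  assumes "w0 \<in> Mset n e"
  shows "pairing n e (basis w0) v = (\<Sum>w1\<in>Mset n e. v w1 * (if word_le w0 w1 then 1 else 0))"
proof -
  have "pairing n e (basis w0) v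
      = (\<Sum>a\<in>Mset n e. if a = w0 then \<Sum>w1\<in>Mset n e. v w1 * (if word_le w0 w1 then 1 else 0) else 0)"
    unfolding pairing_def by (rule sum.cong) (auto simp: basis_def)
  then show ?thesis using assms finite_Mset by simp
qed

lemma pairing_basis_right:
  assumes "w1 \<in> Mset n e"
  shows "pairing n e u (basis w1) = (\<Sum>w0\<in>Mset n e. u w0 * (if word_le w0 w1 then 1 else 0))"
  unfolding pairing_def
proof (rule sum.cong[OF refl])
  fix w0
  have "(\<Sum>b\<in>Mset n e. u w0 * basis w1 b * (if word_le w0 b then 1 else 0))
      = (\<Sum>b\<in>Mset n e. if b = w1 then u w0 * (if word_le w0 w1 then 1 else 0) else 0)"
    by (rule sum.cong) (auto simp: basis_def)
  then show "(\<Sum>b\<in>Mset n e. u w0 * basis w1 b * (if word_le w0 b then 1 else 0))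
      = u w0 * (if word_le w0 w1 then 1 else 0)"
    using assms finite_Mset by simp
qed

lemma dotp_basis_right: "x \<in> Mset n e \<Longrightarrow> dotp n e v (basis x) = v x"
proof -
  assume "x \<in> Mset n e"
  have "dotp n e v (basis x) = (\<Sum>y\<in>Mset n e. if y = x then v y else 0)"
    unfolding dotp_def by (rule sum.cong) (auto simp: basis_def)
  then show ?thesis using \<open>x \<in> Mset n e\<close> finite_Mset by simp
qed

lemma unitriangular_cancel:
  fixes z z' :: "'a \<Rightarrow> 'b::ring_1" and rank :: "'a \<Rightarrow> int"
  assumes M: "finite M"
    and refl: "\<And>a. a \<in> M \<Longrightarrow> R a a"
    and rank: "\<And>a b. a \<in> M \<Longrightarrow> b \<in> M \<Longrightarrow> R a b \<Longrightarrow> a \<noteq> b \<Longrightarrow> rank a < rank b"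
    and eq: "\<And>a. a \<in> M \<Longrightarrow>
      (\<Sum>b\<in>M. z b * (if R a b then 1 else 0)) = (\<Sum>b\<in>M. z' b * (if R a b then 1 else 0))"
    and a: "a \<in> M"
  shows "z a = z' a"
proof (rule ccontr)
  assume "z a \<noteq> z' a"
  define S where "S = {b \<in> M. z b \<noteq> z' b}"
  have "finite S" "a \<in> S" using M a \<open>z a \<noteq> z' a\<close> by (auto simp: S_def)
  then obtain a0 where a0: "a0 \<in> S" and top: "\<And>b. b \<in> S \<Longrightarrow> rank b \<le> rank a0"
  proof -
    have "Max (rank ` S) \<in> rank ` S" using \<open>finite S\<close> \<open>a \<in> S\<close> by (intro Max_in) auto
    then obtain a0 where "a0 \<in> S" "rank a0 = Max (rank ` S)" by (metis imageE)
    then show thesis using that \<open>finite S\<close> by simp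
  qed
  have a0M: "a0 \<in> M" using a0 by (simp add: S_def)
  have "(\<Sum>b\<in>M. (z b - z' b) * (if R a0 b then 1 else 0)) = (\<Sum>b\<in>M. if b = a0 then z b - z' b else 0)"
  proof (rule sum.cong)
    fix b assume b: "b \<in> M"
    show "(z b - z' b) * (if R a0 b then 1 else 0) = (if b = a0 then z b - z' b else 0)"
    proof (cases "b = a0")
      case False
      have "z b = z' b" if "R a0 b"
      proof (rule ccontr)
        assume "z b \<noteq> z' b"
        then have "rank b \<le> rank a0" using b top by (simp add: S_def)
        then show False using rank[OF a0M b that] False by fastforce
      qed
      then show ?thesis using False by auto
    qed (use refl[OF a0M] in simp)
  qed simp
  also have "\<dots> = z a0 - z' a0" using M a0M by (simp add: sum.delta')
  finally have "z a0 - z' a0 = 0"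
    using eq[OF a0M] by (simp add: left_diff_distrib sum_subtractf)
  then show False using a0 by (simp add: S_def)
qed

lemma pairing_cancel_right:
  assumes a: "a \<in> Fspan n e" and b: "b \<in> Fspan n e"
    and eq: "\<forall>u\<in>Fspan n e. pairing n e u a = pairing n e u b"
  shows "a = b"
proof
  fix x
  show "a x = b x"
  proof (cases "x \<in> Mset n e")
    case True
    show ?thesis
    proof (rule unitriangular_cancel[OF finite_Mset word_le_refl _ _ True])
      show "int (sum_list (xpos w0)) < int (sum_list (xpos w1))"
        if "w0 \<in> Mset n e" "w1 \<in> Mset n e" "word_le w0 w1" "w0 \<noteq> w1" for w0 w1
        using word_le_imp_sum_xpos_less that by simp
      show "(\<Sum>w1\<in>Mset n e. a w1 * (if word_le w0 w1 then 1 else 0))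
          = (\<Sum>w1\<in>Mset n e. b w1 * (if word_le w0 w1 then 1 else 0))" if "w0 \<in> Mset n e" for w0
        using eq basis_in_Fspan[OF that] by (simp add: pairing_basis_left[OF that, symmetric])
    qed
  qed (use a b in \<open>simp add: Fspan_def\<close>)
qed

lemma pairing_cancel_left:
  assumes a: "a \<in> Fspan n e" and b: "b \<in> Fspan n e"
    and eq: "\<forall>v\<in>Fspan n e. pairing n e a v = pairing n e b v"
  shows "a = b"
proof
  fix x
  show "a x = b x"
  proof (cases "x \<in> Mset n e")
    case True
    show ?thesis
    proof (rule unitriangular_cancel[where R = "\<lambda>w1 w0. word_le w0 w1" and
          rank = "\<lambda>w. - int (sum_list (xpos w))", OF finite_Mset word_le_refl _ _ True])
      show "- int (sum_list (xpos w1)) < - int (sum_list (xpos w0))"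
        if "w1 \<in> Mset n e" "w0 \<in> Mset n e" "word_le w0 w1" "w1 \<noteq> w0" for w0 w1
        using word_le_imp_sum_xpos_less that by simp
      show "(\<Sum>w0\<in>Mset n e. a w0 * (if word_le w0 w1 then 1 else 0))
          = (\<Sum>w0\<in>Mset n e. b w0 * (if word_le w0 w1 then 1 else 0))" if "w1 \<in> Mset n e" for w1
        using eq basis_in_Fspan[OF that] by (simp add: pairing_basis_right[OF that, symmetric])
    qed
  qed (use a b in \<open>simp add: Fspan_def\<close>)
qed

lemma dotp_cancel_left:
  assumes a: "a \<in> Fspan n e" and b: "b \<in> Fspan n e"
    and eq: "\<forall>v\<in>Fspan n e. dotp n e a v = dotp n e b v"
  shows "a = b"
proof
  fix x
  show "a x = b x"
  proof (cases "x \<in> Mset n e")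
    case True
    then show ?thesis using eq basis_in_Fspan[OF True] by (simp flip: dotp_basis_right[OF True])
  qed (use a b in \<open>simp add: Fspan_def\<close>)
qed

section \<open>The right-hand side represents the functional \<open>u \<mapsto> pairing (basis w) u\<close>\<close>

lemma RHS_in_Fspan: "RHS n e w \<in> Fspan n e"
  by (auto simp: Fspan_def RHS_def psiy_in_Mset intro!: sum.neutral)

lemma pairing_basis_RHS:
  assumes w0: "w0 \<in> Mset n e"
  shows "pairing n e (basis w0) (RHS n e w) = (if word_le w w0 then 1 else 0)"
proof -
  let ?M = "Mset n e" and ?W = "{w' \<in> Mset n e. word_le w w'}"
  let ?le = "\<lambda>w1. (if word_le w0 w1 then 1 else 0) :: int"
  let ?hit = "\<lambda>T w' w1. (if psiy T w' = w1 then 1 else 0) :: int"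
  have "pairing n e (basis w0) (RHS n e w)
      = (\<Sum>w1\<in>?M. \<Sum>w'\<in>?W. \<Sum>T\<in>Pow (Ey w'). (-1) ^ card T * ?hit T w' w1 * ?le w1)"
    unfolding pairing_basis_left[OF w0] RHS_def by (simp add: sum_distrib_right)
  also have "\<dots> = (\<Sum>w'\<in>?W. \<Sum>T\<in>Pow (Ey w'). \<Sum>w1\<in>?M. (-1) ^ card T * ?hit T w' w1 * ?le w1)"
    by (subst sum.swap) (rule sum.cong[OF refl], rule sum.swap)
  also have "\<dots> = (\<Sum>w'\<in>?W. \<Sum>T\<in>Pow (Ey w'). (-1) ^ card T * ?le (psiy T w'))"
  proof (intro sum.cong refl)
    fix w' T assume "w' \<in> ?W" and "T \<in> Pow (Ey w')"
    then have "psiy T w' \<in> ?M" using psiy_in_Mset by auto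
    have "(\<Sum>w1\<in>?M. (-1) ^ card T * ?hit T w' w1 * ?le w1)
        = (\<Sum>w1\<in>?M. if psiy T w' = w1 then (-1) ^ card T * ?le w1 else 0)"
      by (rule sum.cong) auto
    then show "(\<Sum>w1\<in>?M. (-1) ^ card T * ?hit T w' w1 * ?le w1) = (-1) ^ card T * ?le (psiy T w')"
      using \<open>psiy T w' \<in> ?M\<close> finite_Mset by simp
  qed
  also have "\<dots> = (\<Sum>w'\<in>?W. if w0 = w' then 1 else 0)"
    using alternating_sum_word_le_psiy[OF w0] by (intro sum.cong) auto
  also have "\<dots> = (if word_le w w0 then 1 else 0)"
    using w0 finite_Mset by (simp add: sum.delta)
  finally show ?thesis .
qed

lemma pairing_RHS:
  assumes w: "w \<in> Mset n e"
  shows "pairing n e u (RHS n e w) = pairing n e (basis w) u"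
proof -
  have "pairing n e u (RHS n e w) = (\<Sum>w0\<in>Mset n e. u w0 * pairing n e (basis w0) (RHS n e w))"
    unfolding pairing_def[of n e u]
  proof (rule sum.cong[OF refl])
    fix w0 assume "w0 \<in> Mset n e"
    then show "(\<Sum>w1\<in>Mset n e. u w0 * RHS n e w w1 * (if word_le w0 w1 then 1 else 0))
        = u w0 * pairing n e (basis w0) (RHS n e w)"
      by (simp add: pairing_basis_left sum_distrib_left mult.assoc)
  qed
  also have "\<dots> = pairing n e (basis w) u"
    by (simp add: pairing_basis_RHS pairing_basis_left[OF w] mult.commute cong: sum.cong)
  finally show ?thesis .
qed

section \<open>The adjoint maps\<close>

text \<open>The indicator of the up-set of w, which will turn out to be Q_-^{-1} w.\<close>
definition upset :: "nat \<Rightarrow> int \<Rightarrow> word \<Rightarrow> (word \<Rightarrow> int)" where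
  "upset n e w = (\<lambda>x. if x \<in> Mset n e \<and> word_le w x then 1 else 0)"

lemma upset_in_Fspan: "upset n e w \<in> Fspan n e"
  by (simp add: upset_def Fspan_def)

lemma dotp_upset:
  assumes "w \<in> Mset n e"
  shows "dotp n e u (upset n e w) = pairing n e (basis w) u"
    and "dotp n e (upset n e w) u = pairing n e (basis w) u"
  using assms by (auto simp: dotp_def upset_def pairing_basis_left mult.commute intro: sum.cong)

theorem mainTheorem6:
  fixes n :: nat and e :: int and w :: word
    and H Qp Qm :: "(word \<Rightarrow> int) \<Rightarrow> (word \<Rightarrow> int)"
  assumes w: "w \<in> Mset n e"
    and linH: "lin_on n e H" and linQp: "lin_on n e Qp" and linQm: "lin_on n e Qm"
    and H: "\<forall>u\<in>Fspan n e. \<forall>v\<in>Fspan n e. pairing n e u v = pairing n e v (H u)"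
    and Qp: "\<forall>u\<in>Fspan n e. \<forall>v\<in>Fspan n e. dotp n e u v = pairing n e u (Qp v)"
    and Qm: "\<forall>u\<in>Fspan n e. \<forall>v\<in>Fspan n e. dotp n e u v = pairing n e (Qm u) v"
  shows "H (basis w) = RHS n e w
       \<and> (\<exists>!v. v \<in> Fspan n e \<and> Qm v = basis w)
       \<and> (\<forall>v\<in>Fspan n e. Qm v = basis w \<longrightarrow> Qp v = RHS n e w)"
proof -
  let ?b = "basis w" and ?up = "upset n e w"
  have b: "?b \<in> Fspan n e" using basis_in_Fspan[OF w] .
  have up: "?up \<in> Fspan n e" by (rule upset_in_Fspan)
  have H_b: "H ?b = RHS n e w"
    using linH b H by (intro pairing_cancel_right) (auto simp: lin_on_def RHS_in_Fspan pairing_RHS[OF w])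
  have Qm_up: "Qm ?up = ?b"
    using linQm up Qm b by (intro pairing_cancel_left) (auto simp: lin_on_def dotp_upset[OF w])
  have Qm_preimage: "v = ?up" if "v \<in> Fspan n e" "Qm v = ?b" for v
    using that up Qm Qm_up by (intro dotp_cancel_left) auto
  have Qp_up: "Qp ?up = RHS n e w"
  proof (rule pairing_cancel_right)
    show "\<forall>u\<in>Fspan n e. pairing n e u (Qp ?up) = pairing n e u (RHS n e w)"
      using Qp up by (metis dotp_upset(1)[OF w] pairing_RHS[OF w])
  qed (use linQp up in \<open>auto simp: lin_on_def RHS_in_Fspan\<close>)
  show ?thesis using H_b Qm_up Qm_preimage Qp_up up by blast
qed

end
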